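(* Let $(t_1,s_1),(t_2,s_2)\in\mathbb{C}^\times\times\mathbb{C}^\times$ with $t_1\ne t_2$ and $s_1\neq s_2$, let $X_1=A_2(t_1,s_1)$, $X_2=A_2(t_2,s_2)$, let $\varepsilon_0=\det(X_1)+\det(X_2)-\det(X_1+X_2)$, and for $n\in\mathbb{N}$ let $f_n(z)=\sum_{k=0}^{\lfloor n/2\rfloor}(-1)^k\frac{n}{n-k}\binom{n-k}{k}z^{n-2k}$. Then $(X_1X_2)^n+(X_2X_1)^n=f_n(\varepsilon_0)I_2$ for all $n\in\mathbb{N}$.
   Context: $\mathbb{C}^\times=\mathbb{C}\setminus\{0\}$; $A_2(t,s)=\begin{pmatrix} t & s\\ \frac{1-t^2}{s} & -t\end{pmatrix}$; $I_2$ is the $2\times2$ identity matrix; $\lfloor n/2\rfloor$ is the largest integer $\le n/2$. *)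

theory Defs
  imports Complex_Main "Jordan_Normal_Form.Determinant"
begin

definition A2 :: "complex \<Rightarrow> complex \<Rightarrow> complex mat" where
  "A2 t s = mat_of_rows_list 2 [[t, s], [(1 - t^2) / s, - t]]"

definition f_poly :: "nat \<Rightarrow> complex \<Rightarrow> complex" where
  "f_poly n z = (\<Sum>k = 0..n div 2. (-1) ^ k * (of_nat n / of_nat (n - k))
                    * of_nat ((n - k) choose k) * z ^ (n - 2 * k))"

end

theory Submission
  imports Defs
begin

text \<open>
  The matrices \<open>A\<^sub>2(t, s)\<close> are traceless with determinant \<open>-1\<close>, hence involutions, so
  \<open>P = X\<^sub>1X\<^sub>2\<close> and \<open>Q = X\<^sub>2X\<^sub>1\<close> are mutually inverse. For traceless \<open>2 \<times> 2\<close> matrices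
  the anticommutator is the scalar \<open>\<epsilon>\<^sub>0 = det X\<^sub>1 + det X\<^sub>2 - det (X\<^sub>1 + X\<^sub>2)\<close>, so
  \<open>P + Q = \<epsilon>\<^sub>0 I\<close> and \<open>P\<^sup>2 = \<epsilon>\<^sub>0 P - I\<close>. Hence \<open>P\<^sup>n + Q\<^sup>n\<close> obeys the recurrence
  \<open>S\<^sub>n\<^sub>+\<^sub>2 = \<epsilon>\<^sub>0 S\<^sub>n\<^sub>+\<^sub>1 - S\<^sub>n\<close> with \<open>S\<^sub>0 = 2I\<close>, \<open>S\<^sub>1 = \<epsilon>\<^sub>0 I\<close>, i.e.\ it is the Dickson
  polynomial \<open>D\<^sub>n(\<epsilon>\<^sub>0, 1)\<close> times \<open>I\<close>, and \<open>f\<^sub>n\<close> is the explicit formula for \<open>D\<^sub>n(z, 1)\<close>,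
  obtained from \<open>D\<^sub>n = E\<^sub>n - E\<^sub>n\<^sub>-\<^sub>2\<close> with the Dickson polynomials \<open>E\<^sub>n\<close> of the second kind.
\<close>

fun dickson_D :: "nat \<Rightarrow> 'a::comm_ring_1 \<Rightarrow> 'a" where
  "dickson_D 0 z = 2"
| "dickson_D (Suc 0) z = z"
| "dickson_D (Suc (Suc n)) z = z * dickson_D (Suc n) z - dickson_D n z"

definition dickson_E_term :: "nat \<Rightarrow> nat \<Rightarrow> 'a::comm_ring_1 \<Rightarrow> 'a" where
  "dickson_E_term n k z = (-1) ^ k * of_nat ((n - k) choose k) * z ^ (n - 2 * k)"

definition dickson_E :: "nat \<Rightarrow> 'a::comm_ring_1 \<Rightarrow> 'a" where
  "dickson_E n z = (\<Sum>k\<le>n. dickson_E_term n k z)"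

lemma dickson_E_term_eq_0: "n < 2 * k \<Longrightarrow> dickson_E_term n k z = 0"
  by (simp add: dickson_E_term_def binomial_eq_0)

lemma dickson_E_eq_sum_atMost:
  assumes "n div 2 \<le> m"
  shows "dickson_E n z = (\<Sum>k\<le>m. dickson_E_term n k z)"
proof -
  have "(\<Sum>k\<le>N. dickson_E_term n k z) = (\<Sum>k\<le>n div 2. dickson_E_term n k z)"
    if "n div 2 \<le> N" for N
    using that by (intro sum.mono_neutral_right) (auto intro: dickson_E_term_eq_0)
  from this[of n] this[of m] assms show ?thesis
    unfolding dickson_E_def by simp
qed

lemma dickson_E_term_Suc_Suc:
  "dickson_E_term (n + 2) (Suc k) z = z * dickson_E_term (n + 1) (Suc k) z - dickson_E_term n k z"
proof -
  consider "n < 2 * k" | "n = 2 * k" | "2 * k < n" by linarith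
  then show ?thesis
  proof cases
    case 2
    then show ?thesis by (simp add: dickson_E_term_def Suc_diff_le binomial_eq_0)
  next
    case 3
    then have "n + 2 - Suc k = Suc (n - k)" "n + 1 - Suc k = n - k"
      "n + 2 - 2 * Suc k = n - 2 * k" "n - 2 * k = Suc (n + 1 - 2 * Suc k)" by auto
    then show ?thesis by (simp add: dickson_E_term_def algebra_simps)
  qed (simp add: dickson_E_term_eq_0)
qed

lemma dickson_E_Suc_Suc: "dickson_E (n + 2) z = z * dickson_E (n + 1) z - dickson_E n z"
proof -
  have shift: "dickson_E l z = dickson_E_term l 0 z + (\<Sum>k\<le>n + 1. dickson_E_term l (Suc k) z)"
    if "l div 2 \<le> Suc (n + 1)" for l
    using dickson_E_eq_sum_atMost[OF that, of z]
      sum.atMost_Suc_shift[of "\<lambda>k. dickson_E_term l k z" "n + 1"] by (simp only:)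
  have "dickson_E (n + 2) z
      = dickson_E_term (n + 2) 0 z + (\<Sum>k\<le>n + 1. dickson_E_term (n + 2) (Suc k) z)"
    by (rule shift) simp
  also have "\<dots> = z * (dickson_E_term (n + 1) 0 z + (\<Sum>k\<le>n + 1. dickson_E_term (n + 1) (Suc k) z))
      - (\<Sum>k\<le>n + 1. dickson_E_term n k z)"
    by (simp only: dickson_E_term_Suc_Suc sum_subtractf)
      (simp add: dickson_E_term_def sum_distrib_left algebra_simps del: sum.atMost_Suc)
  also have "\<dots> = z * dickson_E (n + 1) z - dickson_E n z"
    using shift[of "n + 1"] dickson_E_eq_sum_atMost[of n "n + 1" z] by simp
  finally show ?thesis .
qed

lemma dickson_D_eq_dickson_E_diff:
  "dickson_D (n + 2) z = dickson_E (n + 2) z - dickson_E n (z :: 'a :: comm_ring_1)"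
proof (induction n z rule: dickson_D.induct)
  case (1 z)
  show ?case by (simp add: dickson_E_def dickson_E_term_def numeral_2_eq_2 power2_eq_square)
next
  case (2 z)
  show ?case
    using dickson_E_Suc_Suc[of 0 z] dickson_E_Suc_Suc[of 1 z]
    by (simp add: dickson_E_def dickson_E_term_def numeral_2_eq_2 algebra_simps)
next
  case (3 n z)
  have "dickson_D (Suc (Suc n) + 2) z = z * dickson_D (Suc n + 2) z - dickson_D (n + 2) z"
    by (simp add: numeral_2_eq_2)
  also have "\<dots> = (z * dickson_E (Suc n + 2) z - dickson_E (n + 2) z)
      - (z * dickson_E (Suc n) z - dickson_E n z)"
    unfolding 3 by (simp add: algebra_simps)
  also have "\<dots> = dickson_E (Suc (Suc n) + 2) z - dickson_E (Suc (Suc n)) z"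
    using dickson_E_Suc_Suc[of "Suc (Suc n)" z] dickson_E_Suc_Suc[of n z] by simp
  finally show ?case .
qed

lemma Suc_Suc_times_binomial:
  assumes "2 * j \<le> m"
  shows "(m + 2) * (Suc (m - j) choose Suc j)
    = Suc (m - j) * ((Suc (m - j) choose Suc j) + ((m - j) choose j))"
proof -
  have "Suc (m - j) * ((m - j) choose j) = Suc j * (Suc (m - j) choose Suc j)"
    by (rule Suc_times_binomial[symmetric])
  moreover have "m + 2 = Suc (m - j) + Suc j" using assms by simp
  ultimately show ?thesis by (simp only: add_mult_distrib add_mult_distrib2)
qed

lemma f_poly_summand_Suc_eq:
  fixes z :: complex
  assumes "2 * j \<le> m"
  shows "(-1) ^ Suc j * (of_nat (m + 2) / of_nat (m + 2 - Suc j)) * of_nat ((m + 2 - Suc j) choose Suc j)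
           * z ^ (m + 2 - 2 * Suc j)
         = dickson_E_term (m + 2) (Suc j) z - dickson_E_term m j z"
proof -
  have idx: "m + 2 - Suc j = Suc (m - j)" "m + 2 - 2 * Suc j = m - 2 * j"
    using assms by auto
  have "of_nat (m + 2) * of_nat (Suc (m - j) choose Suc j)
      = of_nat (Suc (m - j)) * (of_nat (Suc (m - j) choose Suc j) + of_nat ((m - j) choose j) :: complex)"
    by (simp only: of_nat_mult[symmetric] of_nat_add[symmetric] Suc_Suc_times_binomial[OF assms])
  then have coeff: "of_nat (m + 2) / of_nat (Suc (m - j)) * of_nat (Suc (m - j) choose Suc j)
      = (of_nat (Suc (m - j) choose Suc j) + of_nat ((m - j) choose j) :: complex)"
    by (simp add: field_simps del: of_nat_Suc)
  show ?thesis
    unfolding idx mult.assoc[of "(-1) ^ Suc j"] coeff dickson_E_term_def idx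
    by (simp add: algebra_simps del: binomial_Suc_Suc)
qed

lemma f_poly_eq_dickson_E_diff: "f_poly (m + 2) z = dickson_E (m + 2) z - dickson_E m z"
proof -
  have half: "(m + 2) div 2 = Suc (m div 2)" by simp
  have "of_nat (m + 2) \<noteq> (0 :: complex)" by (simp only: of_nat_eq_0_iff)
  have "f_poly (m + 2) z = dickson_E_term (m + 2) 0 z
      + (\<Sum>j\<le>m div 2. dickson_E_term (m + 2) (Suc j) z - dickson_E_term m j z)"
    unfolding f_poly_def atLeast0AtMost half sum.atMost_Suc_shift
      Suc_eq_plus1[symmetric]
    by (intro arg_cong2[where f = "(+)"] sum.cong refl f_poly_summand_Suc_eq)
      (use \<open>of_nat (m + 2) \<noteq> 0\<close> in \<open>auto simp: dickson_E_term_def\<close>)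
  also have "\<dots> = dickson_E (m + 2) z - dickson_E m z"
    using dickson_E_eq_sum_atMost[of "m + 2" "Suc (m div 2)" z] dickson_E_eq_sum_atMost[of m "m div 2" z]
    by (simp add: sum.atMost_Suc_shift sum_subtractf del: sum.atMost_Suc)
  finally show ?thesis .
qed

text \<open>\<open>f_poly 0 z = 0\<close> (the coefficient is \<open>0 / 0 = 0\<close>) whereas \<open>D\<^sub>0 = 2\<close>, hence \<open>n \<ge> 1\<close>.\<close>

lemma f_poly_eq_dickson_D: "n \<ge> 1 \<Longrightarrow> f_poly n z = dickson_D n z"
proof (cases n)
  case (Suc k)
  show ?thesis
  proof (cases k)
    case 0
    with Suc show ?thesis by (simp add: f_poly_def)
  next
    case (Suc m)
    then show ?thesis
      using \<open>n = Suc k\<close> f_poly_eq_dickson_E_diff[of m z] dickson_D_eq_dickson_E_diff[of m z]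
      by (simp add: numeral_2_eq_2)
  qed
qed simp

lemma pow_mat_Suc_Suc_of_quadratic:
  fixes A :: "'a :: comm_ring_1 mat"
  assumes A: "A \<in> carrier_mat n n" and quadratic: "A * A = e \<cdot>\<^sub>m A - 1\<^sub>m n"
  shows "A ^\<^sub>m Suc (Suc k) = e \<cdot>\<^sub>m A ^\<^sub>m Suc k - A ^\<^sub>m k"
proof -
  have Ak: "A ^\<^sub>m k \<in> carrier_mat n n" using A by simp
  have "A ^\<^sub>m Suc (Suc k) = A ^\<^sub>m k * (A * A)" using A by (simp add: assoc_mult_mat[OF Ak A A])
  also have "\<dots> = e \<cdot>\<^sub>m (A ^\<^sub>m k * A) - A ^\<^sub>m k"
    unfolding quadratic using A Ak
    by (simp add: mult_minus_distrib_mat[OF Ak smult_carrier_mat[OF A] one_carrier_mat]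
        mult_smult_distrib[OF Ak A])
  finally show ?thesis by simp
qed

lemma eq_minus_mat_of_add_eq:
  fixes A :: "'a :: group_add mat"
  assumes "A \<in> carrier_mat nr nc" "C \<in> carrier_mat nr nc" "A + C = B"
  shows "A = B - C"
proof (rule eq_matI)
  fix i j assume "i < dim_row (B - C)" "j < dim_col (B - C)"
  then show "A $$ (i, j) = (B - C) $$ (i, j)"
    using assms(1,2) by (simp add: assms(3)[symmetric])
qed (use assms in auto)

lemma square_mat_of_inverse_sum:
  fixes P Q :: "'a :: comm_ring_1 mat"
  assumes P: "P \<in> carrier_mat n n" and Q: "Q \<in> carrier_mat n n"
    and PQ: "P * Q = 1\<^sub>m n" and sum: "P + Q = e \<cdot>\<^sub>m 1\<^sub>m n"
  shows "P * P = e \<cdot>\<^sub>m P - 1\<^sub>m n"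
proof (rule eq_minus_mat_of_add_eq)
  have "P * P + 1\<^sub>m n = P * (P + Q)" using P Q PQ by (simp add: mult_add_distrib_mat)
  also have "\<dots> = e \<cdot>\<^sub>m P"
    unfolding sum using P by (simp add: mult_smult_distrib[OF P one_carrier_mat])
  finally show "P * P + 1\<^sub>m n = e \<cdot>\<^sub>m P" .
qed (use P in auto)

lemma pow_mat_add_pow_inverse_eq_dickson_D:
  fixes P Q :: "'a :: field mat"
  assumes P: "P \<in> carrier_mat n n" and Q: "Q \<in> carrier_mat n n"
    and PQ: "P * Q = 1\<^sub>m n" and sum: "P + Q = e \<cdot>\<^sub>m 1\<^sub>m n"
  shows "P ^\<^sub>m k + Q ^\<^sub>m k = dickson_D k e \<cdot>\<^sub>m 1\<^sub>m n"
  using sum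
proof (induction k e rule: dickson_D.induct)
  case (1 e)
  show ?case using P Q by (intro eq_matI) auto
next
  case (2 e)
  then show ?case using P Q by simp
next
  case (3 k e)
  have QP: "Q * P = 1\<^sub>m n" by (rule mat_mult_left_right_inverse[OF P Q PQ])
  have "Q + P = e \<cdot>\<^sub>m 1\<^sub>m n" using "3.prems" P Q by (simp add: comm_add_mat)
  note recurrence = pow_mat_Suc_Suc_of_quadratic[OF P square_mat_of_inverse_sum[OF P Q PQ "3.prems"], of k]
    pow_mat_Suc_Suc_of_quadratic[OF Q square_mat_of_inverse_sum[OF Q P QP this], of k]
  have combine: "(e \<cdot>\<^sub>m A1 - A0) + (e \<cdot>\<^sub>m B1 - B0) = e \<cdot>\<^sub>m (A1 + B1) - (A0 + B0)"
    if "{A1, A0, B1, B0} \<subseteq> carrier_mat n n" for A1 A0 B1 B0 :: "'a mat"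
    using that by (intro eq_matI) (auto simp: algebra_simps)
  have "P ^\<^sub>m Suc (Suc k) + Q ^\<^sub>m Suc (Suc k)
      = e \<cdot>\<^sub>m (P ^\<^sub>m Suc k + Q ^\<^sub>m Suc k) - (P ^\<^sub>m k + Q ^\<^sub>m k)"
    unfolding recurrence using P Q by (intro combine) auto
  also have "\<dots> = dickson_D (Suc (Suc k)) e \<cdot>\<^sub>m 1\<^sub>m n"
    unfolding "3.IH"[OF "3.prems"] by (intro eq_matI) (auto simp: algebra_simps)
  finally show ?case .
qed

lemma det_mat_1x1:
  assumes "(A :: 'a :: comm_ring_1 mat) \<in> carrier_mat 1 1"
  shows "det A = A $$ (0, 0)"
  using det_lower_triangular[of 1 A] assms by (simp add: diag_mat_def)

lemma det_mat_2x2: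
  assumes A: "(A :: 'a :: comm_ring_1 mat) \<in> carrier_mat 2 2"
  shows "det A = A $$ (0, 0) * A $$ (1, 1) - A $$ (0, 1) * A $$ (1, 0)"
proof -
  have "det A = A $$ (0, 0) * cofactor A 0 0 + A $$ (1, 0) * cofactor A 1 0"
    using laplace_expansion_column[OF A, of 0] by (simp add: numeral_2_eq_2)
  moreover have "mat_delete A 0 0 \<in> carrier_mat 1 1" "mat_delete A 1 0 \<in> carrier_mat 1 1"
    using A by auto
  ultimately show ?thesis
    using A by (simp add: cofactor_def det_mat_1x1 mat_delete_def algebra_simps)
qed

lemma index_mult_mat_2x2:
  assumes "A \<in> carrier_mat 2 2" "B \<in> carrier_mat 2 2" "i < 2" "j < 2"
  shows "(A * B) $$ (i, j) = A $$ (i, 0) * B $$ (0, j) + A $$ (i, 1) * B $$ (1, j)"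
  using assms by (simp add: scalar_prod_def numeral_2_eq_2)

lemma traceless_anticommutator:
  fixes X Y :: "'a :: comm_ring_1 mat"
  assumes X: "X \<in> carrier_mat 2 2" and Y: "Y \<in> carrier_mat 2 2"
    and trX: "X $$ (1, 1) = - X $$ (0, 0)" and trY: "Y $$ (1, 1) = - Y $$ (0, 0)"
  shows "X * Y + Y * X = (det X + det Y - det (X + Y)) \<cdot>\<^sub>m 1\<^sub>m 2" (is "_ = ?D")
proof (rule eq_matI)
  fix i j assume "i < dim_row ?D" "j < dim_col ?D"
  then have ij: "i < 2" "j < 2" by auto
  then have ij_cases: "i = 0 \<or> i = 1" "j = 0 \<or> j = 1" by auto
  have "(X * Y + Y * X) $$ (i, j) = (X * Y) $$ (i, j) + (Y * X) $$ (i, j)"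
    using X Y ij by simp
  also have "\<dots> = X $$ (i, 0) * Y $$ (0, j) + X $$ (i, 1) * Y $$ (1, j)
      + (Y $$ (i, 0) * X $$ (0, j) + Y $$ (i, 1) * X $$ (1, j))"
    by (simp only: index_mult_mat_2x2[OF X Y ij] index_mult_mat_2x2[OF Y X ij])
  also have "\<dots> = ?D $$ (i, j)"
    using ij_cases X Y trX trY by (auto simp: det_mat_2x2 algebra_simps)
  finally show "(X * Y + Y * X) $$ (i, j) = ?D $$ (i, j)" .
qed (use X Y in auto)

lemma traceless_square:
  fixes X :: "'a :: comm_ring_1 mat"
  assumes X: "X \<in> carrier_mat 2 2" and trX: "X $$ (1, 1) = - X $$ (0, 0)"
  shows "X * X = (- det X) \<cdot>\<^sub>m 1\<^sub>m 2" (is "_ = ?D")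
proof (rule eq_matI)
  fix i j assume "i < dim_row ?D" "j < dim_col ?D"
  then have ij: "i < 2" "j < 2" by auto
  then have ij_cases: "i = 0 \<or> i = 1" "j = 0 \<or> j = 1" by auto
  have "(X * X) $$ (i, j) = X $$ (i, 0) * X $$ (0, j) + X $$ (i, 1) * X $$ (1, j)"
    by (rule index_mult_mat_2x2[OF X X ij])
  also have "\<dots> = ?D $$ (i, j)"
    using ij_cases X trX by (auto simp: det_mat_2x2 algebra_simps)
  finally show "(X * X) $$ (i, j) = ?D $$ (i, j)" .
qed (use X in auto)

lemma A2_carrier: "A2 t s \<in> carrier_mat 2 2"
proof -
  have "A2 t s \<in> carrier_mat (length [[t, s], [(1 - t^2) / s, - t]]) 2"
    unfolding A2_def mat_of_rows_list_def by (rule mat_carrier)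
  moreover have "length [[t, s], [(1 - t^2) / s, - t]] = 2" by simp
  ultimately show ?thesis by (simp only:)
qed

lemma A2_index:
  "A2 t s $$ (0, 0) = t" "A2 t s $$ (0, 1) = s" "A2 t s $$ (1, 0) = (1 - t^2) / s" "A2 t s $$ (1, 1) = - t"
  unfolding A2_def by (simp_all add: mat_of_rows_list_def)

lemma det_A2: "s \<noteq> 0 \<Longrightarrow> det (A2 t s) = -1"
  by (simp only: det_mat_2x2[OF A2_carrier] A2_index) (simp add: field_simps power2_eq_square)

lemma A2_involution: "s \<noteq> 0 \<Longrightarrow> A2 t s * A2 t s = 1\<^sub>m 2"
proof -
  have "A2 t s * A2 t s = (- det (A2 t s)) \<cdot>\<^sub>m 1\<^sub>m 2"
    by (rule traceless_square[OF A2_carrier]) (simp only: A2_index)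
  also assume "s \<noteq> 0"
  then have "(- det (A2 t s)) \<cdot>\<^sub>m 1\<^sub>m 2 = 1\<^sub>m 2"
    by (intro eq_matI) (auto simp: det_A2)
  finally show ?thesis .
qed

lemma mult_involutions_inverse:
  fixes X Y :: "'a :: semiring_1 mat"
  assumes X: "X \<in> carrier_mat n n" and Y: "Y \<in> carrier_mat n n"
    and XX: "X * X = 1\<^sub>m n" and YY: "Y * Y = 1\<^sub>m n"
  shows "(X * Y) * (Y * X) = 1\<^sub>m n"
proof -
  have "(X * Y) * (Y * X) = X * (Y * Y) * X"
    using X Y by (simp add: assoc_mult_mat[of _ n n _ n _ n])
  then show ?thesis using X XX YY by (simp add: right_mult_one_mat[OF X])
qed

theorem mainTheorem10:
  fixes t1 s1 t2 s2 :: complex and n :: nat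
  assumes "t1 \<noteq> 0" "s1 \<noteq> 0" "t2 \<noteq> 0" "s2 \<noteq> 0"
    and "t1 \<noteq> t2" "s1 \<noteq> s2"
    and "n \<ge> 1"
  shows "let X1 = A2 t1 s1; X2 = A2 t2 s2;
             \<epsilon>0 = det X1 + det X2 - det (X1 + X2)
         in (X1 * X2) ^\<^sub>m n + (X2 * X1) ^\<^sub>m n = f_poly n \<epsilon>0 \<cdot>\<^sub>m 1\<^sub>m 2"
proof -
  \<comment> \<open>Only \<open>s1, s2 \<noteq> 0\<close> (so that \<open>A2\<close> has determinant \<open>-1\<close>) and \<open>n \<ge> 1\<close> are needed.\<close>
  define X1 X2 where "X1 = A2 t1 s1" and "X2 = A2 t2 s2"
  define \<epsilon>0 where "\<epsilon>0 = det X1 + det X2 - det (X1 + X2)"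
  have X1: "X1 \<in> carrier_mat 2 2" and X2: "X2 \<in> carrier_mat 2 2"
    unfolding X1_def X2_def by (rule A2_carrier)+
  have "X1 * X1 = 1\<^sub>m 2" "X2 * X2 = 1\<^sub>m 2"
    unfolding X1_def X2_def using A2_involution assms(2,4) by blast+
  then have "(X1 * X2) * (X2 * X1) = 1\<^sub>m 2"
    by (rule mult_involutions_inverse[OF X1 X2])
  moreover have "X1 * X2 + X2 * X1 = \<epsilon>0 \<cdot>\<^sub>m 1\<^sub>m 2"
    unfolding \<epsilon>0_def X1_def X2_def
    by (rule traceless_anticommutator[OF A2_carrier A2_carrier]) (simp_all only: A2_index)
  ultimately have "(X1 * X2) ^\<^sub>m n + (X2 * X1) ^\<^sub>m n = dickson_D n \<epsilon>0 \<cdot>\<^sub>m 1\<^sub>m 2"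
    using X1 X2 by (intro pow_mat_add_pow_inverse_eq_dickson_D) auto
  then show ?thesis
    unfolding Let_def X1_def X2_def \<epsilon>0_def by (simp only: f_poly_eq_dickson_D[OF assms(7)])
qed

end
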